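(* For integers $k,\ell,r,n$ with $0 \leq k-r \leq k \leq \ell \leq \ell+r \leq n$, the polynomial \[ \overline{ { n \brack k}}_{q,t} \overline{ { n \brack \ell}}_{q,t} - \overline{ { n \brack k-r}}_{q,t} \overline{ { n \brack \ell+r}}_{q,t} \] has non-negative coefficients as a polynomial in $t$ and $q$.
   Context: An overpartition is a partition in which the last occurrence of each distinct part size may be overlined; its weight $|\lambda|$ is the sum of its parts. For integers $0\le b\le a$, $\overline{{a \brack b}}_{q,t}=\sum_{\lambda} t^{\#_o(\lambda)} q^{|\lambda|}$, the sum over all overpartitions $\lambda$ with largest part at most $a-b$ and at most $b$ parts, $\#_o(\lambda)$ being the number of overlined parts. *)

theory Defs
  imports "HOL-Library.Multiset" "HOL-Computational_Algebra.Polynomial"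
begin

text \<open>An overpartition is a partition (a finite multiset of positive parts) together with
  the set of distinct part sizes whose last occurrence is overlined.\<close>

definition overpartitions_box :: "nat \<Rightarrow> nat \<Rightarrow> (nat multiset \<times> nat set) set" where
  "overpartitions_box m b =
     {(p, ov). (\<forall>x \<in># p. 0 < x \<and> x \<le> m) \<and> size p \<le> b \<and> ov \<subseteq> set_mset p}"

text \<open>Bivariate polynomials in q and t are represented as polynomials in q whose
  coefficients are polynomials in t (type int poly poly).
  ovgauss a b is the overpartition analogue of the Gaussian polynomial [a choose b]_{q,t}:
  the sum of t^(number of overlined parts) q^(weight) over overpartitions with largest part
  at most a - b and at most b parts.\<close>

definition ovgauss :: "nat \<Rightarrow> nat \<Rightarrow> int poly poly" where
  "ovgauss a b = (\<Sum>(p, ov) \<in> overpartitions_box (a - b) b. monom (monom 1 (card ov)) (sum_mset p))"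

definition nonneg_coeffs2 :: "int poly poly \<Rightarrow> bool" where
  "nonneg_coeffs2 P \<longleftrightarrow> (\<forall>i j. 0 \<le> coeff (coeff P i) j)"

end

theory Submission
  imports Defs
begin

text \<open>Let \<open>ovbox m b\<close> be the generating function of overpartitions with parts at most \<open>m\<close>
  and at most \<open>b\<close> parts, so that \<open>ovgauss n k = ovbox (n - k) k\<close>. Removing the largest
  allowed part gives a three-term recurrence with coefficients \<open>1\<close>, \<open>q\<^sup>c\<close> and \<open>t q\<^sup>c\<close>, and
  there is a dual one in the number of parts. Expanding one factor of both products in
  \<open>ovbox x1 y1 * ovbox x2 y2 - q\<^sup>e * ovbox (x1 + 1) (y1 - 1) * ovbox (x2 - 1) (y2 + 1)\<close>
  by the same recurrence writes this difference as a combination, with non-negative coefficients,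
  of three differences of the same shape; choosing the recurrence suitably preserves the
  inequalities between the indices, so induction shows that the difference has non-negative
  coefficients. Its instance \<open>e = 0\<close> is the case \<open>r = 1\<close>, and the general case telescopes.\<close>

lemma nonneg_coeffs2_0 [simp]: "nonneg_coeffs2 0"
  by (simp add: nonneg_coeffs2_def)

lemma nonneg_coeffs2_1 [simp]: "nonneg_coeffs2 1"
  by (simp add: nonneg_coeffs2_def coeff_1)

lemma nonneg_coeffs2_monom: "nonneg_coeffs2 (monom (monom 1 c) s)"
  by (simp add: nonneg_coeffs2_def)

lemma nonneg_coeffs2_add: "nonneg_coeffs2 a \<Longrightarrow> nonneg_coeffs2 b \<Longrightarrow> nonneg_coeffs2 (a + b)"
  by (simp add: nonneg_coeffs2_def)

lemma nonneg_coeffs2_mult: "nonneg_coeffs2 a \<Longrightarrow> nonneg_coeffs2 b \<Longrightarrow> nonneg_coeffs2 (a * b)"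
  by (auto simp: nonneg_coeffs2_def coeff_mult coeff_sum intro!: sum_nonneg)

definition q_var :: "int poly poly" where "q_var = monom 1 1"
definition t_var :: "int poly poly" where "t_var = monom (monom 1 1) 0"

lemma q_var_power: "q_var ^ n = monom 1 n"
  by (simp add: q_var_def monom_power)

lemma nonneg_coeffs2_q_var_power: "nonneg_coeffs2 (q_var ^ n)"
  using nonneg_coeffs2_monom[of 0 n] by (simp add: q_var_power)

lemma nonneg_coeffs2_t_var: "nonneg_coeffs2 t_var"
  unfolding t_var_def by (rule nonneg_coeffs2_monom)

lemma nonneg_coeffs2_recurrence:
  "nonneg_coeffs2 a \<Longrightarrow> nonneg_coeffs2 b \<Longrightarrow> nonneg_coeffs2 c \<Longrightarrow>
   nonneg_coeffs2 (a + q_var ^ n * b + t_var * q_var ^ n * c)"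
  by (intro nonneg_coeffs2_add nonneg_coeffs2_mult nonneg_coeffs2_q_var_power nonneg_coeffs2_t_var)

section \<open>The generating function of overpartitions in a box\<close>

definition ov_weight :: "nat multiset \<times> nat set \<Rightarrow> int poly poly" where
  "ov_weight x = monom (monom 1 (card (snd x))) (sum_mset (fst x))"

definition ovbox :: "nat \<Rightarrow> nat \<Rightarrow> int poly poly" where
  "ovbox m b = (\<Sum>x \<in> overpartitions_box m b. ov_weight x)"

lemma ovgauss_eq_ovbox: "ovgauss a b = ovbox (a - b) b"
  by (simp add: ovgauss_def ovbox_def ov_weight_def case_prod_beta)

lemma finite_overpartitions_box: "finite (overpartitions_box m b)"
proof (rule finite_subset)
  show "overpartitions_box m b \<subseteq> (\<Union>k\<le>b. multisets_of_size {1..m} k) \<times> Pow {1..m}"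
    by (force simp: overpartitions_box_def multisets_of_size_def)
qed auto

lemma overpartitions_box_0_left: "overpartitions_box 0 b = {({#}, {})}"
  by (auto simp: overpartitions_box_def) (metis less_irrefl multiset_nonemptyE)

lemma overpartitions_box_0_right: "overpartitions_box m 0 = {({#}, {})}"
  by (auto simp: overpartitions_box_def)

definition add_part :: "nat \<Rightarrow> nat multiset \<times> nat set \<Rightarrow> nat multiset \<times> nat set" where
  "add_part c x = (add_mset c (fst x), snd x)"

definition add_overlined_part :: "nat \<Rightarrow> nat multiset \<times> nat set \<Rightarrow> nat multiset \<times> nat set" where
  "add_overlined_part c x = (add_mset c (fst x), insert c (snd x))"

lemma overpartitions_box_parts_le: "x \<in> overpartitions_box m b \<Longrightarrow> y \<in># fst x \<Longrightarrow> y \<le> m"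
  by (auto simp: overpartitions_box_def)

lemma overpartitions_box_overlined_subset: "x \<in> overpartitions_box m b \<Longrightarrow> snd x \<subseteq> set_mset (fst x)"
  by (auto simp: overpartitions_box_def)

lemma overpartitions_box_Suc_Suc:
  "overpartitions_box (Suc m) (Suc b) =
     overpartitions_box m (Suc b) \<union> add_part (Suc m) ` overpartitions_box (Suc m) b
       \<union> add_overlined_part (Suc m) ` overpartitions_box m b" (is "?L = ?A \<union> ?B \<union> ?C")
proof
  show "?L \<subseteq> ?A \<union> ?B \<union> ?C"
  proof
    fix x assume "x \<in> ?L"
    then obtain p ov where x: "x = (p, ov)" and parts: "\<forall>y\<in>#p. 0 < y \<and> y \<le> Suc m"
      and size: "size p \<le> Suc b" and ov: "ov \<subseteq> set_mset p"
      by (auto simp: overpartitions_box_def)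
    show "x \<in> ?A \<union> ?B \<union> ?C"
    proof (cases "Suc m \<in># p")
      case False
      then have "\<forall>y\<in>#p. 0 < y \<and> y \<le> m"
        using parts le_Suc_eq by blast
      then have "x \<in> ?A"
        using x size ov by (simp add: overpartitions_box_def)
      then show ?thesis by blast
    next
      case True
      define p' where "p' = p - {#Suc m#}"
      have p: "p = add_mset (Suc m) p'"
        using True by (simp add: p'_def)
      have size': "size p' \<le> b"
        using size by (simp add: p)
      show ?thesis
      proof (cases "Suc m \<in> ov \<and> Suc m \<notin># p'")
        case True
        then have "\<forall>y\<in>#p'. 0 < y \<and> y \<le> m"
          using parts le_Suc_eq by (fastforce simp: p)
        moreover have "ov - {Suc m} \<subseteq> set_mset p'"
          using ov by (auto simp: p)
        ultimately have "(p', ov - {Suc m}) \<in> overpartitions_box m b"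
          using size' by (simp add: overpartitions_box_def)
        moreover have "x = add_overlined_part (Suc m) (p', ov - {Suc m})"
          using x True by (auto simp: add_overlined_part_def p)
        ultimately show ?thesis by blast
      next
        case False
        then have "ov \<subseteq> set_mset p'"
          using ov by (auto simp: p)
        then have "(p', ov) \<in> overpartitions_box (Suc m) b"
          using parts size' by (simp add: overpartitions_box_def p)
        moreover have "x = add_part (Suc m) (p', ov)"
          using x by (simp add: add_part_def p)
        ultimately show ?thesis by blast
      qed
    qed
  qed
  show "?A \<union> ?B \<union> ?C \<subseteq> ?L"
    by (auto simp: overpartitions_box_def add_part_def add_overlined_part_def le_SucI)
qed

lemma overpartitions_box_Suc_notin: "x \<in> overpartitions_box m b \<Longrightarrow> Suc m \<notin># fst x"
  using overpartitions_box_parts_le[of x m b "Suc m"] by auto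

lemma overpartitions_box_Suc_Suc_disjoint_left:
  "overpartitions_box m (Suc b) \<inter>
     (add_part (Suc m) ` overpartitions_box (Suc m) b \<union> add_overlined_part (Suc m) ` overpartitions_box m b) = {}"
  by (auto simp: add_part_def add_overlined_part_def dest!: overpartitions_box_Suc_notin)

lemma overpartitions_box_Suc_Suc_disjoint_right:
  "add_part (Suc m) ` overpartitions_box (Suc m) b \<inter> add_overlined_part (Suc m) ` overpartitions_box m b = {}"
proof -
  have "add_part (Suc m) x \<noteq> add_overlined_part (Suc m) y"
    if x: "x \<in> overpartitions_box (Suc m) b" and y: "y \<in> overpartitions_box m b" for x y
  proof
    assume "add_part (Suc m) x = add_overlined_part (Suc m) y"
    then have "fst x = fst y" and "Suc m \<in> snd x"
      by (simp_all add: add_part_def add_overlined_part_def prod_eq_iff)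
    then show False
      using overpartitions_box_overlined_subset[OF x] overpartitions_box_Suc_notin[OF y] by auto
  qed
  then show ?thesis by blast
qed

lemma inj_add_part: "inj (add_part c)"
  by (auto simp: inj_def add_part_def prod_eq_iff)

lemma overpartitions_box_Suc_notin_overlined: "x \<in> overpartitions_box m b \<Longrightarrow> Suc m \<notin> snd x"
  using overpartitions_box_Suc_notin[of x m b] overpartitions_box_overlined_subset[of x m b] by auto

lemma inj_on_add_overlined_part: "inj_on (add_overlined_part (Suc m)) (overpartitions_box m b)"
proof (rule inj_onI)
  fix x y assume x: "x \<in> overpartitions_box m b" and y: "y \<in> overpartitions_box m b"
    and "add_overlined_part (Suc m) x = add_overlined_part (Suc m) y"
  then have "fst x = fst y" "insert (Suc m) (snd x) = insert (Suc m) (snd y)"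
    by (simp_all add: add_overlined_part_def prod_eq_iff)
  then show "x = y"
    using overpartitions_box_Suc_notin_overlined[OF x] overpartitions_box_Suc_notin_overlined[OF y]
    by (metis insert_ident prod_eq_iff)
qed

lemma ov_weight_add_part: "ov_weight (add_part c x) = q_var ^ c * ov_weight x"
  unfolding q_var_power by (simp add: ov_weight_def add_part_def mult_monom)

lemma ov_weight_add_overlined_part:
  assumes "x \<in> overpartitions_box m b"
  shows "ov_weight (add_overlined_part (Suc m) x) = t_var * q_var ^ Suc m * ov_weight x"
proof -
  have "finite (snd x)"
    using overpartitions_box_overlined_subset[OF assms] finite_subset by blast
  then show ?thesis
    using overpartitions_box_Suc_notin_overlined[OF assms]
    unfolding q_var_power by (simp add: ov_weight_def add_overlined_part_def t_var_def mult_monom)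
qed

lemma ovbox_0_left [simp]: "ovbox 0 b = 1"
  by (simp add: ovbox_def overpartitions_box_0_left ov_weight_def)

lemma ovbox_0_right [simp]: "ovbox m 0 = 1"
  by (simp add: ovbox_def overpartitions_box_0_right ov_weight_def)

text \<open>Split according to whether the largest possible part \<open>Suc m\<close> occurs, and if so,
  whether it is overlined and occurs only once.\<close>

lemma ovbox_Suc_Suc:
  "ovbox (Suc m) (Suc b) = ovbox m (Suc b) + q_var ^ Suc m * ovbox (Suc m) b + t_var * q_var ^ Suc m * ovbox m b"
proof -
  let ?A = "overpartitions_box m (Suc b)"
    and ?B = "add_part (Suc m) ` overpartitions_box (Suc m) b"
    and ?C = "add_overlined_part (Suc m) ` overpartitions_box m b"
  have fin: "finite ?A" "finite ?B" "finite ?C"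
    by (simp_all add: finite_overpartitions_box)
  have "ovbox (Suc m) (Suc b) = sum ov_weight ?A + sum ov_weight ?B + sum ov_weight ?C"
    unfolding ovbox_def overpartitions_box_Suc_Suc
    using fin overpartitions_box_Suc_Suc_disjoint_left[of m b] overpartitions_box_Suc_Suc_disjoint_right[of m b]
    by (simp add: sum.union_disjoint Int_Un_distrib Int_Un_distrib2)
  also have "sum ov_weight ?B = q_var ^ Suc m * ovbox (Suc m) b"
    by (simp add: ovbox_def sum.reindex[OF inj_on_subset[OF inj_add_part]] ov_weight_add_part sum_distrib_left)
  also have "sum ov_weight ?C = t_var * q_var ^ Suc m * ovbox m b"
    by (simp add: ovbox_def sum.reindex[OF inj_on_add_overlined_part] ov_weight_add_overlined_part sum_distrib_left)
  finally show ?thesis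
    by (simp add: ovbox_def)
qed

text \<open>The second recurrence is obtained algebraically: the two recurrences commute, so the
  defect of the second one satisfies the homogeneous form of the first one, and it vanishes on the
  boundary.\<close>

definition parts_defect :: "nat \<Rightarrow> nat \<Rightarrow> int poly poly" where
  "parts_defect m b = ovbox (Suc m) (Suc b) - ovbox (Suc m) b
     - q_var ^ Suc b * ovbox m (Suc b) - t_var * q_var ^ Suc b * ovbox m b"

lemma parts_defect_0_0: "parts_defect 0 0 = 0"
  unfolding parts_defect_def ovbox_Suc_Suc[of 0 0] by simp

lemma parts_defect_0_Suc: "parts_defect 0 (Suc b) = q_var * parts_defect 0 b"
  unfolding parts_defect_def ovbox_Suc_Suc[of 0 "Suc b"] ovbox_Suc_Suc[of 0 b]
  by (simp add: algebra_simps)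

lemma parts_defect_Suc_0: "parts_defect (Suc m) 0 = parts_defect m 0"
  unfolding parts_defect_def ovbox_Suc_Suc[of "Suc m" 0] ovbox_Suc_Suc[of m 0]
  by (simp add: algebra_simps)

lemma parts_defect_Suc_Suc:
  "parts_defect (Suc m) (Suc b) =
     parts_defect m (Suc b) + q_var ^ Suc (Suc m) * parts_defect (Suc m) b
       + t_var * q_var ^ Suc (Suc m) * parts_defect m b"
  unfolding parts_defect_def ovbox_Suc_Suc[of "Suc m" "Suc b"] ovbox_Suc_Suc[of "Suc m" b]
    ovbox_Suc_Suc[of m "Suc b"] ovbox_Suc_Suc[of m b]
  by (simp add: algebra_simps)

lemma parts_defect_eq_0: "parts_defect m b = 0"
proof (induction m arbitrary: b)
  case 0
  show ?case
    by (induction b) (simp_all add: parts_defect_0_0 parts_defect_0_Suc)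
next
  case (Suc m)
  show ?case
    by (induction b) (simp_all add: parts_defect_Suc_0 parts_defect_Suc_Suc Suc.IH)
qed

lemma ovbox_Suc_Suc_parts:
  "ovbox (Suc m) (Suc b) = ovbox (Suc m) b + q_var ^ Suc b * ovbox m (Suc b) + t_var * q_var ^ Suc b * ovbox m b"
  using parts_defect_eq_0[of m b] by (simp add: parts_defect_def algebra_simps)

section \<open>Products of two generating functions\<close>

text \<open>Extension by zero to negative indices, so that the recurrences below hold up to the boundary.\<close>

definition ovbox_int :: "int \<Rightarrow> int \<Rightarrow> int poly poly" where
  "ovbox_int x y = (if x < 0 \<or> y < 0 then 0 else ovbox (nat x) (nat y))"

lemma ovbox_int_of_nat [simp]: "ovbox_int (int m) (int b) = ovbox m b"
  by (simp add: ovbox_int_def)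

lemma nonneg_coeffs2_ovbox: "nonneg_coeffs2 (ovbox m b)"
proof (induction m arbitrary: b)
  case (Suc m)
  show ?case
    by (induction b) (simp_all add: ovbox_Suc_Suc nonneg_coeffs2_recurrence Suc.IH del: power_Suc)
qed simp

lemma nonneg_coeffs2_ovbox_int: "nonneg_coeffs2 (ovbox_int x y)"
  by (simp add: ovbox_int_def nonneg_coeffs2_ovbox)

lemma ovbox_int_largest:
  assumes "0 \<le> x" "0 \<le> y" "x \<noteq> 0 \<or> y \<noteq> 0"
  shows "ovbox_int x y = ovbox_int (x - 1) y + q_var ^ nat x * ovbox_int x (y - 1)
           + t_var * q_var ^ nat x * ovbox_int (x - 1) (y - 1)"
proof -
  obtain m b where "x = int m" "y = int b"
    using assms(1,2) nonneg_int_cases by metis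
  then show ?thesis
    using assms(3) by (cases m; cases b) (simp_all add: ovbox_int_def nat_add_distrib ovbox_Suc_Suc del: power_Suc)
qed

lemma ovbox_int_parts:
  assumes "0 \<le> x" "0 \<le> y" "x \<noteq> 0 \<or> y \<noteq> 0"
  shows "ovbox_int x y = ovbox_int x (y - 1) + q_var ^ nat y * ovbox_int (x - 1) y
           + t_var * q_var ^ nat y * ovbox_int (x - 1) (y - 1)"
proof -
  obtain m b where "x = int m" "y = int b"
    using assms(1,2) nonneg_int_cases by metis
  then show ?thesis
    using assms(3) by (cases m; cases b) (simp_all add: ovbox_int_def nat_add_distrib ovbox_Suc_Suc_parts del: power_Suc)
qed

definition ovbox_exchange :: "int \<Rightarrow> int \<Rightarrow> int \<Rightarrow> int \<Rightarrow> nat \<Rightarrow> int poly poly" where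
  "ovbox_exchange x1 y1 x2 y2 e =
     ovbox_int x1 y1 * ovbox_int x2 y2 - q_var ^ e * ovbox_int (x1 + 1) (y1 - 1) * ovbox_int (x2 - 1) (y2 + 1)"

lemma ovbox_exchange_right_parts:
  assumes "1 \<le> x2" "0 \<le> y2"
  shows "ovbox_exchange x1 y1 x2 y2 e = ovbox_exchange x1 y1 x2 (y2 - 1) e
     + q_var ^ nat y2 * ovbox_exchange x1 y1 (x2 - 1) y2 (e + 1)
     + t_var * q_var ^ nat y2 * ovbox_exchange x1 y1 (x2 - 1) (y2 - 1) (e + 1)"
proof -
  have "nat (y2 + 1) = Suc (nat y2)"
    using assms by simp
  then have "ovbox_int (x2 - 1) (y2 + 1) = ovbox_int (x2 - 1) y2
      + q_var ^ nat y2 * q_var * ovbox_int (x2 - 2) (y2 + 1) + t_var * (q_var ^ nat y2 * q_var) * ovbox_int (x2 - 2) y2"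
    using ovbox_int_parts[of "x2 - 1" "y2 + 1"] assms by (simp add: algebra_simps)
  then show ?thesis
    using ovbox_int_parts[of x2 y2] assms
    by (simp add: ovbox_exchange_def algebra_simps)
qed

lemma ovbox_exchange_right_largest:
  assumes "1 \<le> x2" "0 \<le> y2"
  shows "ovbox_exchange x1 y1 x2 y2 (Suc e) = ovbox_exchange x1 y1 (x2 - 1) y2 (Suc e)
     + q_var ^ nat x2 * ovbox_exchange x1 y1 x2 (y2 - 1) e
     + t_var * q_var ^ nat x2 * ovbox_exchange x1 y1 (x2 - 1) (y2 - 1) e"
proof -
  have "nat x2 = Suc (nat (x2 - 1))"
    using assms by simp
  then have shifted: "q_var * ovbox_int (x2 - 1) (y2 + 1) = q_var * ovbox_int (x2 - 2) (y2 + 1)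
      + q_var ^ nat x2 * ovbox_int (x2 - 1) y2 + t_var * q_var ^ nat x2 * ovbox_int (x2 - 2) y2"
    using ovbox_int_largest[of "x2 - 1" "y2 + 1"] assms by (simp add: algebra_simps)
  have expand: "ovbox_int x2 y2 = ovbox_int (x2 - 1) y2 + q_var ^ nat x2 * ovbox_int x2 (y2 - 1)
      + t_var * q_var ^ nat x2 * ovbox_int (x2 - 1) (y2 - 1)"
    using ovbox_int_largest[of x2 y2] assms by simp
  have "ovbox_exchange x1 y1 x2 y2 (Suc e) = ovbox_int x1 y1 * ovbox_int x2 y2
      - q_var ^ e * ovbox_int (x1 + 1) (y1 - 1) * (q_var * ovbox_int (x2 - 1) (y2 + 1))"
    by (simp add: ovbox_exchange_def algebra_simps)
  also have "\<dots> = ovbox_exchange x1 y1 (x2 - 1) y2 (Suc e)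
     + q_var ^ nat x2 * ovbox_exchange x1 y1 x2 (y2 - 1) e
     + t_var * q_var ^ nat x2 * ovbox_exchange x1 y1 (x2 - 1) (y2 - 1) e"
    unfolding shifted expand
    using assms by (simp add: ovbox_exchange_def algebra_simps)
  finally show ?thesis .
qed

lemma ovbox_exchange_left_parts:
  assumes "0 \<le> x1" "1 \<le> y1"
  shows "ovbox_exchange x1 y1 x2 y2 (Suc e) = ovbox_exchange x1 (y1 - 1) x2 y2 (Suc e)
     + q_var ^ nat y1 * ovbox_exchange (x1 - 1) y1 x2 y2 e
     + t_var * q_var ^ nat y1 * ovbox_exchange (x1 - 1) (y1 - 1) x2 y2 e"
proof -
  have "nat y1 = Suc (nat (y1 - 1))"
    using assms by simp
  then have shifted: "q_var * ovbox_int (x1 + 1) (y1 - 1) = q_var * ovbox_int (x1 + 1) (y1 - 2)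
      + q_var ^ nat y1 * ovbox_int x1 (y1 - 1) + t_var * q_var ^ nat y1 * ovbox_int x1 (y1 - 2)"
    using ovbox_int_parts[of "x1 + 1" "y1 - 1"] assms by (simp add: algebra_simps)
  have expand: "ovbox_int x1 y1 = ovbox_int x1 (y1 - 1) + q_var ^ nat y1 * ovbox_int (x1 - 1) y1
      + t_var * q_var ^ nat y1 * ovbox_int (x1 - 1) (y1 - 1)"
    using ovbox_int_parts[of x1 y1] assms by simp
  have "ovbox_exchange x1 y1 x2 y2 (Suc e) = ovbox_int x1 y1 * ovbox_int x2 y2
      - q_var ^ e * (q_var * ovbox_int (x1 + 1) (y1 - 1)) * ovbox_int (x2 - 1) (y2 + 1)"
    by (simp add: ovbox_exchange_def algebra_simps)
  also have "\<dots> = ovbox_exchange x1 (y1 - 1) x2 y2 (Suc e)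
     + q_var ^ nat y1 * ovbox_exchange (x1 - 1) y1 x2 y2 e
     + t_var * q_var ^ nat y1 * ovbox_exchange (x1 - 1) (y1 - 1) x2 y2 e"
    unfolding shifted expand
    using assms by (simp add: ovbox_exchange_def algebra_simps)
  finally show ?thesis .
qed

lemma ovbox_exchange_left_largest:
  assumes "1 \<le> x1" "1 \<le> y1"
  shows "ovbox_exchange x1 y1 x2 y2 e = ovbox_exchange (x1 - 1) y1 x2 y2 e
     + q_var ^ nat x1 * ovbox_exchange x1 (y1 - 1) x2 y2 (e + 1)
     + t_var * q_var ^ nat x1 * ovbox_exchange (x1 - 1) (y1 - 1) x2 y2 (e + 1)"
proof -
  have "nat (x1 + 1) = Suc (nat x1)"
    using assms by simp
  then have "ovbox_int (x1 + 1) (y1 - 1) = ovbox_int x1 (y1 - 1)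
      + q_var ^ nat x1 * q_var * ovbox_int (x1 + 1) (y1 - 2) + t_var * (q_var ^ nat x1 * q_var) * ovbox_int x1 (y1 - 2)"
    using ovbox_int_largest[of "x1 + 1" "y1 - 1"] assms by (simp add: algebra_simps)
  then show ?thesis
    using ovbox_int_largest[of x1 y1] assms
    by (simp add: ovbox_exchange_def algebra_simps)
qed

text \<open>Induction on \<open>x1 + y1 + x2 + y2\<close>: in each case one of the four expansions above
  keeps all three hypotheses for the three smaller differences; when none applies we have
  \<open>y1 = y2 + 1\<close>, \<open>x2 = x1 + 1\<close> and \<open>e = 0\<close>, where the difference vanishes.\<close>

lemma nonneg_coeffs2_ovbox_exchange:
  assumes "0 \<le> x1" "0 \<le> y1" "0 \<le> x2" "0 \<le> y2" "y1 \<le> y2 + 1" "x2 \<le> x1 + 1" "int e + y1 + x2 \<le> y2 + x1 + 2"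
  shows "nonneg_coeffs2 (ovbox_exchange x1 y1 x2 y2 e)"
  using assms
proof (induction "nat (x1 + y1 + x2 + y2)" arbitrary: x1 y1 x2 y2 e rule: less_induct)
  case less
  consider (degenerate) "y1 = 0 \<or> x2 = 0"
    | (right_parts) "1 \<le> y1" "1 \<le> x2" "y1 \<le> y2" "int e + 1 + y1 + x2 \<le> y2 + x1 + 2"
    | (right_largest) e' where "1 \<le> y1" "1 \<le> x2" "y1 \<le> y2" "e = Suc e'" "int e + y1 + x2 = y2 + x1 + 2"
    | (left_parts) e' where "1 \<le> y1" "1 \<le> x2" "y1 = y2 + 1" "x2 \<le> x1" "e = Suc e'"
    | (left_largest) "1 \<le> y1" "1 \<le> x2" "y1 = y2 + 1" "x2 \<le> x1" "e = 0"
    | (vanishing) "y1 = y2 + 1" "x2 = x1 + 1" "e = 0"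
    using less.prems by atomize_elim presburger
  then show ?case
  proof cases
    case degenerate
    then have "ovbox_exchange x1 y1 x2 y2 e = ovbox_int x1 y1 * ovbox_int x2 y2"
      by (auto simp: ovbox_exchange_def ovbox_int_def)
    then show ?thesis
      by (simp add: nonneg_coeffs2_mult nonneg_coeffs2_ovbox_int)
  next
    case right_parts
    show ?thesis
      unfolding ovbox_exchange_right_parts[OF \<open>1 \<le> x2\<close> \<open>0 \<le> y2\<close>]
      by (intro nonneg_coeffs2_recurrence; rule less.hyps) (use less.prems right_parts in auto)
  next
    case right_largest
    show ?thesis
      unfolding right_largest(4) ovbox_exchange_right_largest[OF \<open>1 \<le> x2\<close> \<open>0 \<le> y2\<close>]
      by (intro nonneg_coeffs2_recurrence; rule less.hyps) (use less.prems right_largest in auto)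
  next
    case left_parts
    show ?thesis
      unfolding left_parts(5) ovbox_exchange_left_parts[OF \<open>0 \<le> x1\<close> \<open>1 \<le> y1\<close>]
      by (intro nonneg_coeffs2_recurrence; rule less.hyps) (use less.prems left_parts in auto)
  next
    case left_largest
    then have "1 \<le> x1"
      by simp
    show ?thesis
      unfolding ovbox_exchange_left_largest[OF \<open>1 \<le> x1\<close> \<open>1 \<le> y1\<close>]
      by (intro nonneg_coeffs2_recurrence; rule less.hyps) (use less.prems left_largest in auto)
  next
    case vanishing
    then show ?thesis
      by (simp add: ovbox_exchange_def)
  qed
qed

lemma nonneg_coeffs2_ovgauss_exchange_one:
  assumes "1 \<le> k" "k \<le> l" "l + 1 \<le> n"
  shows "nonneg_coeffs2 (ovgauss n k * ovgauss n l - ovgauss n (k - 1) * ovgauss n (l + 1))"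
proof -
  have shift: "int (n - k) + 1 = int (n - (k - 1))" "int k - 1 = int (k - 1)"
    "int (n - l) - 1 = int (n - (l + 1))" "int l + 1 = int (l + 1)"
    using assms by auto
  have "ovbox_exchange (int (n - k)) (int k) (int (n - l)) (int l) 0
      = ovgauss n k * ovgauss n l - ovgauss n (k - 1) * ovgauss n (l + 1)"
    unfolding ovbox_exchange_def shift ovbox_int_of_nat ovgauss_eq_ovbox by simp
  moreover have "nonneg_coeffs2 (ovbox_exchange (int (n - k)) (int k) (int (n - l)) (int l) 0)"
    using assms by (intro nonneg_coeffs2_ovbox_exchange) auto
  ultimately show ?thesis
    by simp
qed

theorem corollary6p7:
  fixes k l r n :: nat
  assumes "r \<le> k" and "k \<le> l" and "l + r \<le> n"
  shows "nonneg_coeffs2 (ovgauss n k * ovgauss n l - ovgauss n (k - r) * ovgauss n (l + r))"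
  using assms
proof (induction r arbitrary: k l)
  case (Suc r)
  let ?P = "\<lambda>i j. ovgauss n i * ovgauss n j"
  have "nonneg_coeffs2 (?P k l - ?P (k - 1) (l + 1))"
    using Suc.prems by (intro nonneg_coeffs2_ovgauss_exchange_one) auto
  moreover have "nonneg_coeffs2 (?P (k - 1) (l + 1) - ?P (k - 1 - r) (l + 1 + r))"
    using Suc.prems by (intro Suc.IH) auto
  ultimately have "nonneg_coeffs2 (?P k l - ?P (k - 1 - r) (l + 1 + r))"
    using nonneg_coeffs2_add by fastforce
  then show ?case
    by (simp add: add.commute)
qed simp

end
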